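(* Let $\mathcal{A}$ be a finite abelian group and let $\mu$ be the stationary Markov measure on $\mathcal{A}^{\mathbb{Z}}$ with transition matrix $Q=(q^a_b)_{a,b\in\mathcal{A}}$ (where $q^a_b=\Pr[c_1=b\mid c_0=a]$) and stationary probability vector $\nu=(\nu_a)_{a\in\mathcal{A}}$ (with $\nu_a=\Pr[c_0=a]$). If all entries $q^a_b$ are nonzero, then $\mu$ is harmonically mixing.
   Context: Characters of $\mathcal{A}^{\mathbb{Z}}$ are $\chi=\bigotimes_{n\in\mathbb{Z}}\chi_n$ with $\chi_n$ characters of $\mathcal{A}$, all but finitely many trivial; rank$(\chi)$ is the number of nontrivial $\chi_n$. A measure $\mu$ is harmonically mixing if for every $\varepsilon>0$ there is $R$ such that rank$(\chi)>R$ implies $|\int\chi\,d\mu|<\varepsilon$. *)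

theory Defs
  imports "HOL-Probability.Probability"
begin

definition is_character :: "('a::ab_group_add \<Rightarrow> complex) \<Rightarrow> bool" where
  "is_character ch \<longleftrightarrow> (\<forall>a b. ch (a + b) = ch a * ch b) \<and> (\<forall>a. ch a \<noteq> 0)"

text \<open>A character of A^Z is given by a family of characters chi_n, all but finitely
  many trivial. Its support is the set of n with chi_n nontrivial.\<close>
definition char_support :: "(int \<Rightarrow> 'a \<Rightarrow> complex) \<Rightarrow> int set" where
  "char_support X = {n. X n \<noteq> (\<lambda>_. 1)}"

definition is_seq_character :: "(int \<Rightarrow> ('a::ab_group_add) \<Rightarrow> complex) \<Rightarrow> bool" where
  "is_seq_character X \<longleftrightarrow> (\<forall>n. is_character (X n)) \<and> finite (char_support X)"

definition char_rank :: "(int \<Rightarrow> 'a \<Rightarrow> complex) \<Rightarrow> nat" where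
  "char_rank X = card (char_support X)"

definition seq_char_fun :: "(int \<Rightarrow> 'a \<Rightarrow> complex) \<Rightarrow> (int \<Rightarrow> 'a) \<Rightarrow> complex" where
  "seq_char_fun X c = (\<Prod>n\<in>char_support X. X n (c n))"

definition shift_space :: "(int \<Rightarrow> 'a) measure" where
  "shift_space = PiM UNIV (\<lambda>_. count_space UNIV)"

definition harmonically_mixing :: "(int \<Rightarrow> ('a::ab_group_add)) measure \<Rightarrow> bool" where
  "harmonically_mixing \<mu> \<longleftrightarrow>
     (\<forall>\<epsilon>>0. \<exists>R::nat. \<forall>X. is_seq_character X \<and> char_rank X > R \<longrightarrow>
        cmod (integral\<^sup>L \<mu> (seq_char_fun X)) < \<epsilon>)"

text \<open>Q is a stochastic matrix (Q a b = Pr[c_1 = b | c_0 = a]) and nu a stationary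
  probability vector for it.\<close>
definition stochastic_matrix :: "('a::finite \<Rightarrow> 'a \<Rightarrow> real) \<Rightarrow> bool" where
  "stochastic_matrix Q \<longleftrightarrow> (\<forall>a b. Q a b \<ge> 0) \<and> (\<forall>a. (\<Sum>b\<in>UNIV. Q a b) = 1)"

definition stationary_vector :: "('a::finite \<Rightarrow> 'a \<Rightarrow> real) \<Rightarrow> ('a \<Rightarrow> real) \<Rightarrow> bool" where
  "stationary_vector Q \<nu> \<longleftrightarrow> (\<forall>a. \<nu> a \<ge> 0) \<and> (\<Sum>a\<in>UNIV. \<nu> a) = 1 \<and>
     (\<forall>b. (\<Sum>a\<in>UNIV. \<nu> a * Q a b) = \<nu> b)"

definition stationary_markov_measure ::
    "('a::finite \<Rightarrow> 'a \<Rightarrow> real) \<Rightarrow> ('a \<Rightarrow> real) \<Rightarrow> (int \<Rightarrow> 'a) measure \<Rightarrow> bool" where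
  "stationary_markov_measure Q \<nu> \<mu> \<longleftrightarrow>
     stochastic_matrix Q \<and> stationary_vector Q \<nu> \<and>
     prob_space \<mu> \<and> sets \<mu> = sets shift_space \<and>
     (\<forall>(m::int) (n::nat) (w::nat \<Rightarrow> 'a).
        measure \<mu> {c \<in> space \<mu>. \<forall>i\<le>n. c (m + int i) = w i}
          = \<nu> (w 0) * (\<Prod>i<n. Q (w i) (w (Suc i))))"

end

theory Submission
  imports Defs
begin

text \<open>Fix a window containing the support of \<chi>. By the cylinder formula for \<mu>, the
  integral of \<chi> is the total sum of the row vector obtained from \<nu> \<chi>_0 by the twisted
  steps r \<mapsto> (r Q) \<chi>_j (entrywise product), none of which increases the l1 norm. Let
  \<delta> > 0 bound the entries of Q from below and write Q = \<delta> J + (Q - \<delta> J), J the all-ones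
  matrix. A nontrivial \<chi>_j has zero sum, so after its step the total sum is at most
  (1 - N \<delta>) times the l1 norm, where N = |A|; and the \<delta> J part of the following step only
  sees that total sum. So each nontrivial \<chi>_j, together with the step after it, shrinks
  the l1 norm by the factor 1 - (N \<delta>)^2, and the integral of \<chi> is bounded by
  (1 - (N \<delta>)^2)^(rank \<chi> div 2).\<close>

lemma character_zero:
  assumes "is_character ch"
  shows "ch 0 = 1"
proof -
  have "ch 0 * ch 0 = ch 0 * 1" and "ch 0 \<noteq> 0"
    using assms unfolding is_character_def by (metis add_0 mult_1_right)+
  then show ?thesis by simp
qed

lemma norm_character_le_1:
  fixes ch :: "'a::{finite,ab_group_add} \<Rightarrow> complex"
  assumes "is_character ch"
  shows "cmod (ch b) \<le> 1"
proof -
  define M where "M = Max (range (\<lambda>b. cmod (ch b)))"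
  have le_M: "cmod (ch x) \<le> M" for x
    unfolding M_def by simp
  have "M \<in> range (\<lambda>b. cmod (ch b))"
    unfolding M_def by (intro Max_in) auto
  then obtain b0 where "cmod (ch b0) = M"
    by auto
  then have "M * M \<le> M"
    using le_M[of "b0 + b0"] assms by (simp add: is_character_def norm_mult)
  moreover have "1 \<le> M"
    using le_M[of 0] character_zero[OF assms] by simp
  ultimately have "M \<le> 1"
    by (simp add: mult_le_cancel_left1)
  then show ?thesis
    using le_M[of b] by linarith
qed

lemma sum_character_eq_0:
  fixes ch :: "'a::{finite,ab_group_add} \<Rightarrow> complex"
  assumes "is_character ch" and "ch \<noteq> (\<lambda>_. 1)"
  shows "(\<Sum>b\<in>UNIV. ch b) = 0"
proof -
  obtain b0 where b0: "ch b0 \<noteq> 1"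
    using assms(2) by auto
  have "(\<Sum>b\<in>UNIV. ch b) = (\<Sum>b\<in>UNIV. ch (b0 + b))"
    by (rule sum.reindex_bij_witness[where j = "\<lambda>b. b - b0" and i = "\<lambda>b. b0 + b"]) auto
  also have "\<dots> = ch b0 * (\<Sum>b\<in>UNIV. ch b)"
    using assms(1) by (simp add: is_character_def sum_distrib_left)
  finally have "(1 - ch b0) * (\<Sum>b\<in>UNIV. ch b) = 0"
    by (simp add: algebra_simps)
  then show ?thesis
    using b0 by simp
qed

lemma norm_sum_of_real_weights_le:
  assumes "\<And>a. a \<in> A \<Longrightarrow> 0 \<le> w a"
  shows "cmod (\<Sum>a\<in>A. r a * of_real (w a)) \<le> (\<Sum>a\<in>A. cmod (r a) * w a)"
  using norm_sum[of "\<lambda>a. r a * of_real (w a)" A] assms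
  by (simp add: norm_mult)

lemma stochastic_matrix_card_mult_lower_bound_le_1:
  fixes Q :: "'a::finite \<Rightarrow> 'a \<Rightarrow> real"
  assumes "stochastic_matrix Q" and "\<And>a b. \<delta> \<le> Q a b"
  shows "real CARD('a) * \<delta> \<le> 1"
proof -
  have "(\<Sum>b\<in>(UNIV::'a set). \<delta>) \<le> (\<Sum>b\<in>UNIV. Q a b)" for a
    by (intro sum_mono assms(2))
  then show ?thesis
    using assms(1) by (simp add: stochastic_matrix_def)
qed

definition l1_norm :: "('a::finite \<Rightarrow> complex) \<Rightarrow> real" where
  "l1_norm r = (\<Sum>a\<in>UNIV. cmod (r a))"

definition twisted_step ::
    "('a::finite \<Rightarrow> 'a \<Rightarrow> real) \<Rightarrow> ('a \<Rightarrow> complex) \<Rightarrow> ('a \<Rightarrow> complex) \<Rightarrow> 'a \<Rightarrow> complex" where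
  "twisted_step Q \<phi> r b = \<phi> b * (\<Sum>a\<in>UNIV. r a * of_real (Q a b))"

lemma norm_twisted_step_le:
  assumes "cmod (\<phi> b) \<le> 1"
  shows "cmod (twisted_step Q \<phi> r b) \<le> cmod (\<Sum>a\<in>UNIV. r a * of_real (Q a b))"
  using assms by (simp add: twisted_step_def norm_mult mult_left_le_one_le)

lemma l1_norm_twisted_step_le:
  assumes "stochastic_matrix Q" and "\<And>b. cmod (\<phi> b) \<le> 1"
  shows "l1_norm (twisted_step Q \<phi> r) \<le> l1_norm r"
proof -
  have "l1_norm (twisted_step Q \<phi> r) \<le> (\<Sum>b\<in>UNIV. \<Sum>a\<in>UNIV. cmod (r a) * Q a b)"
    unfolding l1_norm_def
  proof (intro sum_mono order_trans[OF norm_twisted_step_le])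
    show "cmod (\<Sum>a\<in>UNIV. r a * of_real (Q a b)) \<le> (\<Sum>a\<in>UNIV. cmod (r a) * Q a b)" for b
      using assms(1) by (intro norm_sum_of_real_weights_le) (simp add: stochastic_matrix_def)
  qed (use assms(2) in auto)
  also have "\<dots> = (\<Sum>a\<in>UNIV. cmod (r a) * (\<Sum>b\<in>UNIV. Q a b))"
    by (subst sum.swap) (simp add: sum_distrib_left)
  also have "\<dots> = l1_norm r"
    using assms(1) by (simp add: stochastic_matrix_def l1_norm_def)
  finally show ?thesis .
qed

lemma norm_sum_character_row_le:
  fixes Q :: "'a::{finite,ab_group_add} \<Rightarrow> 'a \<Rightarrow> real"
  assumes "stochastic_matrix Q" and "\<And>a b. \<delta> \<le> Q a b"
    and "is_character ch" and "ch \<noteq> (\<lambda>_. 1)"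
  shows "cmod (\<Sum>b\<in>UNIV. ch b * of_real (Q a b)) \<le> 1 - real CARD('a) * \<delta>"
proof -
  have "(\<Sum>b\<in>UNIV. ch b * of_real (Q a b))
      = (\<Sum>b\<in>UNIV. ch b * of_real (Q a b - \<delta>)) + (\<Sum>b\<in>UNIV. ch b) * of_real \<delta>"
    by (simp add: algebra_simps sum.distrib sum_distrib_left sum_subtractf)
  also have "\<dots> = (\<Sum>b\<in>UNIV. ch b * of_real (Q a b - \<delta>))"
    using sum_character_eq_0[OF assms(3,4)] by simp
  finally have "cmod (\<Sum>b\<in>UNIV. ch b * of_real (Q a b)) \<le> (\<Sum>b\<in>UNIV. cmod (ch b) * (Q a b - \<delta>))"
    using assms(2) by (metis norm_sum_of_real_weights_le diff_ge_0_iff_ge)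
  also have "\<dots> \<le> (\<Sum>b\<in>UNIV. Q a b - \<delta>)"
    using assms(2,3) norm_character_le_1 by (intro sum_mono mult_left_le_one_le) auto
  also have "\<dots> = 1 - real CARD('a) * \<delta>"
    using assms(1) by (simp add: stochastic_matrix_def sum_subtractf)
  finally show ?thesis .
qed

lemma norm_sum_twisted_step_le:
  fixes Q :: "'a::{finite,ab_group_add} \<Rightarrow> 'a \<Rightarrow> real"
  assumes "stochastic_matrix Q" and "\<And>a b. \<delta> \<le> Q a b"
    and "is_character ch" and "ch \<noteq> (\<lambda>_. 1)"
  shows "cmod (\<Sum>b\<in>UNIV. twisted_step Q ch r b) \<le> (1 - real CARD('a) * \<delta>) * l1_norm r"
proof -
  have "(\<Sum>b\<in>UNIV. twisted_step Q ch r b) = (\<Sum>a\<in>UNIV. r a * (\<Sum>b\<in>UNIV. ch b * of_real (Q a b)))"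
    unfolding twisted_step_def sum_distrib_left by (subst sum.swap) (simp add: algebra_simps)
  also have "cmod \<dots> \<le> (\<Sum>a\<in>UNIV. cmod (r a) * (1 - real CARD('a) * \<delta>))"
    using norm_sum_character_row_le[OF assms]
    by (intro order_trans[OF norm_sum] sum_mono) (simp add: norm_mult mult_left_mono)
  also have "\<dots> = (1 - real CARD('a) * \<delta>) * l1_norm r"
    by (simp add: l1_norm_def sum_distrib_right mult.commute)
  finally show ?thesis .
qed

lemma l1_norm_twisted_step_le_minorized:
  fixes Q :: "'a::finite \<Rightarrow> 'a \<Rightarrow> real"
  assumes "stochastic_matrix Q" and "\<And>a b. \<delta> \<le> Q a b" and "0 \<le> \<delta>"
    and "\<And>b. cmod (\<psi> b) \<le> 1"
  shows "l1_norm (twisted_step Q \<psi> s)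
    \<le> real CARD('a) * \<delta> * cmod (\<Sum>b\<in>UNIV. s b) + (1 - real CARD('a) * \<delta>) * l1_norm s"
proof -
  have "cmod (\<Sum>b\<in>UNIV. s b * of_real (Q b c))
      \<le> \<delta> * cmod (\<Sum>b\<in>UNIV. s b) + (\<Sum>b\<in>UNIV. cmod (s b) * (Q b c - \<delta>))" for c
  proof -
    have "(\<Sum>b\<in>UNIV. s b * of_real (Q b c))
        = of_real \<delta> * (\<Sum>b\<in>UNIV. s b) + (\<Sum>b\<in>UNIV. s b * of_real (Q b c - \<delta>))"
      by (simp add: algebra_simps sum.distrib sum_distrib_left sum_subtractf)
    also have "cmod \<dots> \<le> \<delta> * cmod (\<Sum>b\<in>UNIV. s b) + (\<Sum>b\<in>UNIV. cmod (s b) * (Q b c - \<delta>))"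
      using assms(2,3)
      by (intro order_trans[OF norm_triangle_ineq] add_mono norm_sum_of_real_weights_le)
        (auto simp: norm_mult)
    finally show ?thesis .
  qed
  then have "l1_norm (twisted_step Q \<psi> s)
      \<le> (\<Sum>c\<in>UNIV. \<delta> * cmod (\<Sum>b\<in>UNIV. s b) + (\<Sum>b\<in>UNIV. cmod (s b) * (Q b c - \<delta>)))"
    unfolding l1_norm_def using assms(4) by (intro sum_mono order_trans[OF norm_twisted_step_le])
  also have "\<dots> = real CARD('a) * \<delta> * cmod (\<Sum>b\<in>UNIV. s b)
      + (\<Sum>b\<in>UNIV. cmod (s b) * (\<Sum>c\<in>UNIV. Q b c - \<delta>))"
    by (simp add: sum.distrib sum_distrib_left sum.swap[of "\<lambda>c b. cmod (s b) * (Q b c - \<delta>)"])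
  also have "\<dots> = real CARD('a) * \<delta> * cmod (\<Sum>b\<in>UNIV. s b) + l1_norm s * (1 - real CARD('a) * \<delta>)"
    using assms(1) by (simp add: stochastic_matrix_def sum_subtractf l1_norm_def sum_distrib_right)
  finally show ?thesis
    by (simp add: mult.commute)
qed

lemma l1_norm_twisted_step_twice_le:
  fixes Q :: "'a::{finite,ab_group_add} \<Rightarrow> 'a \<Rightarrow> real"
  assumes "stochastic_matrix Q" and "\<And>a b. \<delta> \<le> Q a b" and "0 \<le> \<delta>"
    and "is_character ch" and "ch \<noteq> (\<lambda>_. 1)" and "\<And>b. cmod (\<psi> b) \<le> 1"
  shows "l1_norm (twisted_step Q \<psi> (twisted_step Q ch r)) \<le> (1 - (real CARD('a) * \<delta>)\<^sup>2) * l1_norm r"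
proof -
  define N\<delta> where "N\<delta> = real CARD('a) * \<delta>"
  have "0 \<le> N\<delta>" and "N\<delta> \<le> 1"
    using assms(1-3) stochastic_matrix_card_mult_lower_bound_le_1 by (auto simp: N\<delta>_def)
  have "l1_norm (twisted_step Q \<psi> (twisted_step Q ch r))
      \<le> N\<delta> * cmod (\<Sum>b\<in>UNIV. twisted_step Q ch r b) + (1 - N\<delta>) * l1_norm (twisted_step Q ch r)"
    unfolding N\<delta>_def using assms(1-3,6) by (rule l1_norm_twisted_step_le_minorized)
  also have "\<dots> \<le> N\<delta> * ((1 - N\<delta>) * l1_norm r) + (1 - N\<delta>) * l1_norm r"
    using \<open>0 \<le> N\<delta>\<close> \<open>N\<delta> \<le> 1\<close> norm_character_le_1[OF assms(4)]
      norm_sum_twisted_step_le[OF assms(1,2,4,5)] l1_norm_twisted_step_le[OF assms(1)]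
    by (intro add_mono mult_left_mono) (auto simp: N\<delta>_def)
  also have "\<dots> = (1 - N\<delta>\<^sup>2) * l1_norm r"
    by (simp add: algebra_simps power2_eq_square)
  finally show ?thesis
    unfolding N\<delta>_def .
qed

fun twisted_forward ::
    "('a::finite \<Rightarrow> 'a \<Rightarrow> real) \<Rightarrow> ('a \<Rightarrow> real) \<Rightarrow> (nat \<Rightarrow> 'a \<Rightarrow> complex) \<Rightarrow> nat \<Rightarrow> 'a \<Rightarrow> complex" where
  "twisted_forward Q \<nu> \<phi> 0 = (\<lambda>b. of_real (\<nu> b) * \<phi> 0 b)"
| "twisted_forward Q \<nu> \<phi> (Suc n) = twisted_step Q (\<phi> (Suc n)) (twisted_forward Q \<nu> \<phi> n)"

definition path_weight ::
    "('a \<Rightarrow> 'a \<Rightarrow> real) \<Rightarrow> ('a \<Rightarrow> real) \<Rightarrow> (nat \<Rightarrow> 'a \<Rightarrow> complex) \<Rightarrow> nat \<Rightarrow> (nat \<Rightarrow> 'a) \<Rightarrow> complex" where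
  "path_weight Q \<nu> \<phi> n w = of_real (\<nu> (w 0) * (\<Prod>i<n. Q (w i) (w (Suc i)))) * (\<Prod>i\<le>n. \<phi> i (w i))"

lemma path_weight_fun_upd:
  "path_weight Q \<nu> \<phi> (Suc n) (w(Suc n := b)) = path_weight Q \<nu> \<phi> n w * of_real (Q (w n) b) * \<phi> (Suc n) b"
proof -
  have "(\<Prod>i<n. Q ((w(Suc n := b)) i) ((w(Suc n := b)) (Suc i))) = (\<Prod>i<n. Q (w i) (w (Suc i)))"
    and "(\<Prod>i\<le>n. \<phi> i ((w(Suc n := b)) i)) = (\<Prod>i\<le>n. \<phi> i (w i))"
    by (intro prod.cong; simp)+
  then show ?thesis
    by (simp add: path_weight_def algebra_simps)
qed

lemma sum_PiE_atMost:
  fixes H :: "(nat \<Rightarrow> 'a::finite) \<Rightarrow> 'b::comm_monoid_add"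
  shows "(\<Sum>w\<in>PiE {..n} (\<lambda>_. UNIV). H w) = (\<Sum>g\<in>PiE {..<n} (\<lambda>_. UNIV). \<Sum>b\<in>UNIV. H (g(n := b)))"
proof -
  have "(\<Sum>w\<in>PiE {..n} (\<lambda>_. UNIV). H w)
      = (\<Sum>(b, g)\<in>UNIV \<times> PiE {..<n} (\<lambda>_. UNIV). H (g(n := b)))"
    unfolding lessThan_Suc_atMost[symmetric] lessThan_Suc PiE_insert_eq
    by (subst sum.reindex[OF inj_combinator]) (simp_all add: case_prod_unfold)
  also have "\<dots> = (\<Sum>g\<in>PiE {..<n} (\<lambda>_. UNIV). \<Sum>b\<in>UNIV. H (g(n := b)))"
    by (subst sum.cartesian_product[symmetric]) (rule sum.swap)
  finally show ?thesis .
qed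

lemma sum_path_weight_mult:
  fixes Q :: "'a::finite \<Rightarrow> 'a \<Rightarrow> real"
  shows "(\<Sum>w\<in>PiE {..n} (\<lambda>_. UNIV). path_weight Q \<nu> \<phi> n w * f (w n))
    = (\<Sum>b\<in>UNIV. twisted_forward Q \<nu> \<phi> n b * f b)"
proof (induction n arbitrary: f)
  case 0
  then show ?case
    by (subst sum_PiE_atMost) (simp add: path_weight_def)
next
  case (Suc n)
  define F where "F a = (\<Sum>c\<in>UNIV. of_real (Q a c) * \<phi> (Suc n) c * f c)" for a
  have "(\<Sum>w\<in>PiE {..Suc n} (\<lambda>_. UNIV). path_weight Q \<nu> \<phi> (Suc n) w * f (w (Suc n)))
      = (\<Sum>g\<in>PiE {..n} (\<lambda>_. UNIV). path_weight Q \<nu> \<phi> n g * F (g n))"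
    by (simp add: sum_PiE_atMost lessThan_Suc_atMost path_weight_fun_upd F_def
        sum_distrib_left mult.assoc)
  also have "\<dots> = (\<Sum>a\<in>UNIV. twisted_forward Q \<nu> \<phi> n a * F a)"
    by (rule Suc.IH)
  also have "\<dots> = (\<Sum>c\<in>UNIV. twisted_forward Q \<nu> \<phi> (Suc n) c * f c)"
    unfolding F_def twisted_step_def twisted_forward.simps sum_distrib_left sum_distrib_right
    by (subst sum.swap) (simp add: mult_ac)
  finally show ?case .
qed

text \<open>Neither \<open>\<phi> 0\<close> nor \<open>\<phi> n\<close> is counted: a nontrivial \<open>\<phi> j\<close> contracts only together
  with the step \<open>j + 1\<close> after it, and \<open>\<phi> 0\<close> only enters the initial vector.\<close>
definition nontrivial_count :: "(nat \<Rightarrow> 'a \<Rightarrow> complex) \<Rightarrow> nat \<Rightarrow> nat" where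
  "nontrivial_count \<phi> n = card {j \<in> {1..<n}. \<phi> j \<noteq> (\<lambda>_. 1)}"

lemma nontrivial_count_Suc:
  "nontrivial_count \<phi> (Suc n) = nontrivial_count \<phi> n + (if 1 \<le> n \<and> \<phi> n \<noteq> (\<lambda>_. 1) then 1 else 0)"
proof -
  have "{j \<in> {1..<Suc n}. \<phi> j \<noteq> (\<lambda>_. 1)}
      = (if 1 \<le> n \<and> \<phi> n \<noteq> (\<lambda>_. 1) then insert n else id) {j \<in> {1..<n}. \<phi> j \<noteq> (\<lambda>_. 1)}"
    by (auto simp: less_Suc_eq)
  then show ?thesis
    by (simp add: nontrivial_count_def)
qed

lemma l1_norm_twisted_forward_0_le:
  assumes "\<And>a. 0 \<le> \<nu> a" and "(\<Sum>a\<in>UNIV. \<nu> a) = 1" and "\<And>b. cmod (\<phi> 0 b) \<le> 1"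
  shows "l1_norm (twisted_forward Q \<nu> \<phi> 0) \<le> 1"
proof -
  have "l1_norm (twisted_forward Q \<nu> \<phi> 0) \<le> (\<Sum>b\<in>UNIV. \<nu> b)"
    unfolding l1_norm_def using assms(1,3)
    by (intro sum_mono) (simp add: norm_mult mult_right_le_one_le)
  then show ?thesis
    using assms(2) by simp
qed

lemma l1_norm_twisted_forward_le:
  fixes Q :: "'a::{finite,ab_group_add} \<Rightarrow> 'a \<Rightarrow> real"
  assumes "stochastic_matrix Q" and "\<And>a b. \<delta> \<le> Q a b" and "0 \<le> \<delta>"
    and "\<And>a. 0 \<le> \<nu> a" and "(\<Sum>a\<in>UNIV. \<nu> a) = 1" and "\<And>j. is_character (\<phi> j)"
  shows "l1_norm (twisted_forward Q \<nu> \<phi> n) \<le> (1 - (real CARD('a) * \<delta>)\<^sup>2) ^ (nontrivial_count \<phi> n div 2)"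
proof -
  define \<rho> where "\<rho> = 1 - (real CARD('a) * \<delta>)\<^sup>2"
  have "real CARD('a) * \<delta> \<le> 1"
    using assms(1,2) by (rule stochastic_matrix_card_mult_lower_bound_le_1)
  then have "0 \<le> \<rho>" and "\<rho> \<le> 1"
    using assms(3) by (auto simp: \<rho>_def power_le_one)
  have \<phi>_le_1: "cmod (\<phi> j b) \<le> 1" for j b
    using assms(6) by (rule norm_character_le_1)
  have step_le: "l1_norm (twisted_step Q (\<phi> j) r) \<le> l1_norm r" for j r
    using assms(1) \<phi>_le_1 by (rule l1_norm_twisted_step_le)
  have initial: "l1_norm (twisted_forward Q \<nu> \<phi> 0) \<le> 1"
    using assms(4,5) \<phi>_le_1 by (rule l1_norm_twisted_forward_0_le)
  show ?thesis
    unfolding \<rho>_def[symmetric]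
  proof (induction n rule: less_induct)
    case (less n)
    consider "n = 0" | "n = 1" | j where "n = Suc (Suc j)" "\<phi> (Suc j) = (\<lambda>_. 1)"
      | j where "n = Suc (Suc j)" "\<phi> (Suc j) \<noteq> (\<lambda>_. 1)"
      by (metis One_nat_def not0_implies_Suc)
    then show ?case
    proof cases
      case 1
      then show ?thesis
        using initial by (simp add: nontrivial_count_def)
    next
      case 2
      then show ?thesis
        using initial step_le[of 1] by (auto simp: nontrivial_count_def intro: order_trans)
    next
      case (3 j)
      have "l1_norm (twisted_forward Q \<nu> \<phi> n) \<le> l1_norm (twisted_forward Q \<nu> \<phi> (Suc j))"
        using 3 step_le by simp
      also have "\<dots> \<le> \<rho> ^ (nontrivial_count \<phi> (Suc j) div 2)"
        using less.IH[of "Suc j"] 3 by simp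
      also have "nontrivial_count \<phi> (Suc j) = nontrivial_count \<phi> n"
        using 3 by (simp add: nontrivial_count_Suc)
      finally show ?thesis .
    next
      case (4 j)
      have "l1_norm (twisted_forward Q \<nu> \<phi> n) \<le> \<rho> * l1_norm (twisted_forward Q \<nu> \<phi> j)"
        using 4 l1_norm_twisted_step_twice_le[OF assms(1,2,3,6) _ \<phi>_le_1] by (simp add: \<rho>_def)
      also have "\<dots> \<le> \<rho> * \<rho> ^ (nontrivial_count \<phi> j div 2)"
        using less.IH[of j] 4 \<open>0 \<le> \<rho>\<close> by (intro mult_left_mono) auto
      also have "\<dots> \<le> \<rho> ^ (nontrivial_count \<phi> n div 2)"
      proof -
        have "nontrivial_count \<phi> n div 2 \<le> Suc (nontrivial_count \<phi> j div 2)"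
          using 4 by (simp add: nontrivial_count_Suc) linarith
        then show ?thesis
          using \<open>0 \<le> \<rho>\<close> \<open>\<rho> \<le> 1\<close> by (metis power_Suc power_decreasing)
      qed
      finally show ?thesis .
    qed
  qed
qed

lemma space_shift_space: "space shift_space = UNIV"
  by (simp add: shift_space_def space_PiM PiE_UNIV_domain)

lemma window_cylinder_in_sets:
  assumes "sets \<mu> = sets shift_space"
  shows "{c \<in> space \<mu>. \<forall>i\<le>L. c (m + int i) = w i} \<in> sets \<mu>"
proof -
  have "Measurable.pred shift_space (\<lambda>c. \<forall>i\<le>L. c (m + int i) = w i)"
    unfolding shift_space_def by measurable
  then have "{c \<in> space shift_space. \<forall>i\<le>L. c (m + int i) = w i} \<in> sets shift_space"
    by (rule predE)
  then show ?thesis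
    unfolding sets_eq_imp_space_eq[OF assms] assms .
qed

lemma window_product_eq_sum_cylinders:
  fixes \<phi> :: "nat \<Rightarrow> 'a::finite \<Rightarrow> complex"
  shows "(\<Prod>j\<le>L. \<phi> j (c (m + int j)))
    = (\<Sum>w\<in>PiE {..L} (\<lambda>_. UNIV). (\<Prod>j\<le>L. \<phi> j (w j))
        * of_real (indicator {c. \<forall>i\<le>L. c (m + int i) = w i} c))"
proof -
  define w\<^sub>c where "w\<^sub>c = restrict (\<lambda>i. c (m + int i)) {..L}"
  have "w\<^sub>c \<in> PiE {..L} (\<lambda>_. UNIV)"
    by (simp add: w\<^sub>c_def)
  moreover have "(\<forall>i\<le>L. c (m + int i) = w i) \<longleftrightarrow> w = w\<^sub>c" if "w \<in> PiE {..L} (\<lambda>_. UNIV)" for w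
    using that by (auto simp: w\<^sub>c_def fun_eq_iff PiE_iff extensional_def)
  ultimately have "(\<Sum>w\<in>PiE {..L} (\<lambda>_. UNIV). (\<Prod>j\<le>L. \<phi> j (w j))
        * of_real (indicator {c. \<forall>i\<le>L. c (m + int i) = w i} c))
      = (\<Sum>w\<in>PiE {..L} (\<lambda>_. UNIV). if w = w\<^sub>c then \<Prod>j\<le>L. \<phi> j (w j) else 0)"
    by (intro sum.cong) (auto simp: indicator_def)
  also have "\<dots> = (\<Prod>j\<le>L. \<phi> j (w\<^sub>c j))"
    using \<open>w\<^sub>c \<in> PiE {..L} (\<lambda>_. UNIV)\<close> by (simp add: finite_PiE)
  also have "\<dots> = (\<Prod>j\<le>L. \<phi> j (c (m + int j)))"
    by (simp add: w\<^sub>c_def)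
  finally show ?thesis
    by (rule sym)
qed

lemma integral_window_product:
  fixes Q :: "'a::finite \<Rightarrow> 'a \<Rightarrow> real"
  assumes "stationary_markov_measure Q \<nu> \<mu>"
  shows "integral\<^sup>L \<mu> (\<lambda>c. \<Prod>j\<le>L. \<phi> j (c (m + int j)))
    = (\<Sum>w\<in>PiE {..L} (\<lambda>_. UNIV). path_weight Q \<nu> \<phi> L w)"
proof -
  define cyl where "cyl w = {c. \<forall>i\<le>L. c (m + int i) = w i}" for w :: "nat \<Rightarrow> 'a"
  interpret prob_space \<mu>
    using assms by (simp add: stationary_markov_measure_def)
  have sets: "sets \<mu> = sets shift_space"
    using assms by (simp add: stationary_markov_measure_def)
  then have "space \<mu> = UNIV"
    by (simp add: sets_eq_imp_space_eq space_shift_space)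
  then have cyl_in_sets: "cyl w \<in> sets \<mu>" for w
    using window_cylinder_in_sets[OF sets, of L m w] by (simp add: cyl_def)
  have measure_cyl: "measure \<mu> (cyl w) = \<nu> (w 0) * (\<Prod>i<L. Q (w i) (w (Suc i)))" for w
    using assms \<open>space \<mu> = UNIV\<close> by (simp add: stationary_markov_measure_def cyl_def)
  have "integral\<^sup>L \<mu> (\<lambda>c. \<Prod>j\<le>L. \<phi> j (c (m + int j)))
      = integral\<^sup>L \<mu> (\<lambda>c. \<Sum>w\<in>PiE {..L} (\<lambda>_. UNIV). (\<Prod>j\<le>L. \<phi> j (w j)) * of_real (indicator (cyl w) c))"
    unfolding cyl_def window_product_eq_sum_cylinders ..
  also have "\<dots> = (\<Sum>w\<in>PiE {..L} (\<lambda>_. UNIV). (\<Prod>j\<le>L. \<phi> j (w j)) * of_real (measure \<mu> (cyl w)))"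
    using cyl_in_sets
    by (subst Bochner_Integration.integral_sum)
      (auto intro!: integrable_mult_right integrable_of_real integrable_real_indicator
        simp: emeasure_finite integral_complex_of_real less_top[symmetric])
  also have "\<dots> = (\<Sum>w\<in>PiE {..L} (\<lambda>_. UNIV). path_weight Q \<nu> \<phi> L w)"
    by (simp add: measure_cyl path_weight_def mult.commute)
  finally show ?thesis .
qed

lemma seq_char_fun_eq_window_product:
  assumes "char_support X \<subseteq> {m<..<m + int L}"
  shows "seq_char_fun X c = (\<Prod>j\<le>L. X (m + int j) (c (m + int j)))"
proof -
  have "char_support X \<subseteq> (\<lambda>j. m + int j) ` {..L}"
  proof
    fix k assume "k \<in> char_support X"
    with assms have "m < k" and "k < m + int L"
      by auto
    then show "k \<in> (\<lambda>j. m + int j) ` {..L}"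
      by (intro image_eqI[of _ _ "nat (k - m)"]) auto
  qed
  then have "seq_char_fun X c = (\<Prod>k\<in>(\<lambda>j. m + int j) ` {..L}. X k (c k))"
    unfolding seq_char_fun_def by (intro prod.mono_neutral_left) (auto simp: char_support_def)
  also have "\<dots> = (\<Prod>j\<le>L. X (m + int j) (c (m + int j)))"
    by (subst prod.reindex) (auto simp: inj_on_def)
  finally show ?thesis .
qed

lemma char_rank_eq_nontrivial_count:
  assumes "char_support X \<subseteq> {m<..<m + int L}"
  shows "char_rank X = nontrivial_count (\<lambda>j. X (m + int j)) L"
proof -
  have "char_support X = (\<lambda>j. m + int j) ` {j \<in> {1..<L}. X (m + int j) \<noteq> (\<lambda>_. 1)}"
  proof (intro equalityI subsetI)
    fix k assume "k \<in> char_support X"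
    with assms have "m < k" and "k < m + int L" and "X k \<noteq> (\<lambda>_. 1)"
      by (auto simp: char_support_def)
    then show "k \<in> (\<lambda>j. m + int j) ` {j \<in> {1..<L}. X (m + int j) \<noteq> (\<lambda>_. 1)}"
      by (intro image_eqI[of _ _ "nat (k - m)"]) auto
  qed (auto simp: char_support_def)
  then show ?thesis
    by (simp add: char_rank_def nontrivial_count_def card_image inj_on_def)
qed

lemma char_support_in_window:
  assumes "is_seq_character X"
  obtains m L where "char_support X \<subseteq> {m<..<m + int L}"
proof -
  obtain k where "abs ` char_support X \<subseteq> {..<k}"
    using assms finite_int_iff_bounded by (auto simp: is_seq_character_def)
  then have "char_support X \<subseteq> {- k<..<- k + int (nat (2 * k))}"
    by force
  then show ?thesis
    by (rule that)
qed

lemma norm_integral_seq_char_fun_le: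
  fixes Q :: "'a::{finite,ab_group_add} \<Rightarrow> 'a \<Rightarrow> real"
  assumes "stationary_markov_measure Q \<nu> \<mu>" and "\<And>a b. \<delta> \<le> Q a b" and "0 \<le> \<delta>"
    and "is_seq_character X"
  shows "cmod (integral\<^sup>L \<mu> (seq_char_fun X)) \<le> (1 - (real CARD('a) * \<delta>)\<^sup>2) ^ (char_rank X div 2)"
proof -
  obtain m L where window: "char_support X \<subseteq> {m<..<m + int L}"
    using assms(4) by (rule char_support_in_window)
  define \<phi> where "\<phi> = (\<lambda>j. X (m + int j))"
  have "seq_char_fun X = (\<lambda>c. \<Prod>j\<le>L. \<phi> j (c (m + int j)))"
    using seq_char_fun_eq_window_product[OF window] by (simp add: fun_eq_iff \<phi>_def)
  then have "integral\<^sup>L \<mu> (seq_char_fun X) = (\<Sum>b\<in>UNIV. twisted_forward Q \<nu> \<phi> L b)"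
    using integral_window_product[OF assms(1)] sum_path_weight_mult[where f = "\<lambda>_. 1"] by simp
  then have "cmod (integral\<^sup>L \<mu> (seq_char_fun X)) \<le> l1_norm (twisted_forward Q \<nu> \<phi> L)"
    by (simp add: l1_norm_def norm_sum)
  also have "\<dots> \<le> (1 - (real CARD('a) * \<delta>)\<^sup>2) ^ (nontrivial_count \<phi> L div 2)"
    using assms(1-4)
    by (intro l1_norm_twisted_forward_le)
      (auto simp: stationary_markov_measure_def stationary_vector_def is_seq_character_def \<phi>_def)
  finally show ?thesis
    by (simp add: char_rank_eq_nontrivial_count[OF window] \<phi>_def)
qed

lemma harmonically_mixingI:
  fixes \<mu> :: "(int \<Rightarrow> 'a::ab_group_add) measure"
  assumes "0 \<le> \<rho>" and "\<rho> < 1"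
    and "\<And>X. is_seq_character X \<Longrightarrow> cmod (integral\<^sup>L \<mu> (seq_char_fun X)) \<le> \<rho> ^ (char_rank X div 2)"
  shows "harmonically_mixing \<mu>"
  unfolding harmonically_mixing_def
proof (intro allI impI)
  fix \<epsilon> :: real
  assume "0 < \<epsilon>"
  then obtain n where "\<rho> ^ n < \<epsilon>"
    using real_arch_pow_inv assms(2) by blast
  have "cmod (integral\<^sup>L \<mu> (seq_char_fun X)) < \<epsilon>"
    if "is_seq_character X" and "2 * n < char_rank X" for X
  proof -
    have "cmod (integral\<^sup>L \<mu> (seq_char_fun X)) \<le> \<rho> ^ (char_rank X div 2)"
      using that(1) by (rule assms(3))
    also have "\<dots> \<le> \<rho> ^ n"
      using that(2) assms(1,2) by (intro power_decreasing) auto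
    finally show ?thesis
      using \<open>\<rho> ^ n < \<epsilon>\<close> by linarith
  qed
  then show "\<exists>R. \<forall>X. is_seq_character X \<and> R < char_rank X \<longrightarrow> cmod (integral\<^sup>L \<mu> (seq_char_fun X)) < \<epsilon>"
    by blast
qed

lemma positive_matrix_lower_bound:
  fixes Q :: "'a::finite \<Rightarrow> 'a \<Rightarrow> real"
  assumes "\<And>a b. 0 < Q a b"
  obtains \<delta> where "0 < \<delta>" and "\<And>a b. \<delta> \<le> Q a b"
proof -
  define \<delta> where "\<delta> = Min (range (case_prod Q))"
  have "0 < \<delta>"
    unfolding \<delta>_def using assms by (subst Min_gr_iff) auto
  moreover have "\<delta> \<le> Q a b" for a b
    unfolding \<delta>_def by (rule Min_le) auto
  ultimately show thesis
    by (rule that)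
qed

theorem mainTheorem6:
  fixes Q :: "'a::{finite, ab_group_add} \<Rightarrow> 'a \<Rightarrow> real"
    and \<nu> :: "'a \<Rightarrow> real"
    and \<mu> :: "(int \<Rightarrow> 'a) measure"
  assumes "stationary_markov_measure Q \<nu> \<mu>"
    and "\<forall>a b. Q a b \<noteq> 0"
  shows "harmonically_mixing \<mu>"
proof -
  have "stochastic_matrix Q"
    using assms(1) by (simp add: stationary_markov_measure_def)
  with assms(2) have positive: "0 < Q a b" for a b
    by (simp add: stochastic_matrix_def order.strict_iff_order)
  obtain \<delta> where "0 < \<delta>" and lower_bound: "\<And>a b. \<delta> \<le> Q a b"
    using positive_matrix_lower_bound[of Q, OF positive] by blast
  define \<rho> where "\<rho> = 1 - (real CARD('a) * \<delta>)\<^sup>2"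
  have "real CARD('a) * \<delta> \<le> 1"
    using \<open>stochastic_matrix Q\<close> lower_bound by (rule stochastic_matrix_card_mult_lower_bound_le_1)
  with \<open>0 < \<delta>\<close> have "0 \<le> \<rho>" and "\<rho> < 1"
    by (auto simp: \<rho>_def power_le_one)
  moreover have "cmod (integral\<^sup>L \<mu> (seq_char_fun X)) \<le> \<rho> ^ (char_rank X div 2)"
    if "is_seq_character X" for X
    unfolding \<rho>_def using assms(1) lower_bound less_imp_le[OF \<open>0 < \<delta>\<close>] that
    by (rule norm_integral_seq_char_fun_le)
  ultimately show ?thesis
    by (rule harmonically_mixingI)
qed

end
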